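(* Any non-confluent explicit Runge--Kutta method with 4 stages and order 4 has positivity step-size coefficient $\gamma=0$.
   Context: An $m$-stage explicit Runge--Kutta method has strictly lower-triangular $A=(a_{ij})\in\mathbb{R}^{m\times m}$, $b\in\mathbb{R}^m$, nodes $c_i=\sum_ja_{ij}$; it is non-confluent if the $c_i$ are pairwise distinct. Applied to $u_k'=q_k(u,t)(u_{k-1}-u_k)/\Delta x$ ($k=1,\dots,N$, $u_0:=u_N$) with step $\Delta t$: $y^i_k=u^n_k+\sum_{j<i}a_{ij}\xi^j_k(y^j_{k-1}-y^j_k)$, $u^{n+1}_k=u^n_k+\sum_ib_i\xi^i_k(y^i_{k-1}-y^i_k)$, $\xi^j_k=\frac{\Delta t}{\Delta x}q_k(y^j,t_n+c_j\Delta t)$. Treating the $\xi^j_\ell$ as independent variables on the grid $\ell\in\mathbb{Z}$, $u^{n+1}_k=\sum_{i=0}^mP_i(\xi)u^n_{k-i}$ for polynomials $P_i$ (independent of $k$) in the $m(m+1)/2$ variables $\xi^j_\ell$, $1\le j\le m$, $k-(m-j)\le\ell\le k$. The step-size coefficient is $\gamma(A,b)=\sup\{\delta\ge0:P_i(\xi)\ge0\ \forall i,\ \forall\xi\in[0,\delta]^{m(m+1)/2}\}$ (or $0$ if empty). *)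

theory Defs
  imports "HOL-Analysis.Analysis"
begin

text \<open>Butcher tableau of an m-stage method: stages indexed 1..m;
  A :: nat => nat => real (entries a_ij), b :: nat => real (weights).\<close>

definition rk_node :: "nat \<Rightarrow> (nat \<Rightarrow> nat \<Rightarrow> real) \<Rightarrow> nat \<Rightarrow> real" where
  "rk_node m A i = (\<Sum>j\<in>{1..m}. A i j)"

definition explicit_rk :: "nat \<Rightarrow> (nat \<Rightarrow> nat \<Rightarrow> real) \<Rightarrow> bool" where
  "explicit_rk m A \<longleftrightarrow> (\<forall>i\<in>{1..m}. \<forall>j\<in>{1..m}. i \<le> j \<longrightarrow> A i j = 0)"

definition non_confluent :: "nat \<Rightarrow> (nat \<Rightarrow> nat \<Rightarrow> real) \<Rightarrow> bool" where
  "non_confluent m A \<longleftrightarrow> inj_on (rk_node m A) {1..m}"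

text \<open>Classical order conditions for order 4 (all rooted trees with at most 4 vertices).\<close>
definition rk_order4 :: "nat \<Rightarrow> (nat \<Rightarrow> nat \<Rightarrow> real) \<Rightarrow> (nat \<Rightarrow> real) \<Rightarrow> bool" where
  "rk_order4 m A b \<longleftrightarrow>
     (let c = rk_node m A; I = {1..m} in
      (\<Sum>i\<in>I. b i) = 1 \<and>
      (\<Sum>i\<in>I. b i * c i) = 1/2 \<and>
      (\<Sum>i\<in>I. b i * c i ^ 2) = 1/3 \<and>
      (\<Sum>i\<in>I. \<Sum>j\<in>I. b i * A i j * c j) = 1/6 \<and>
      (\<Sum>i\<in>I. b i * c i ^ 3) = 1/4 \<and>
      (\<Sum>i\<in>I. \<Sum>j\<in>I. b i * c i * A i j * c j) = 1/8 \<and>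
      (\<Sum>i\<in>I. \<Sum>j\<in>I. b i * A i j * c j ^ 2) = 1/12 \<and>
      (\<Sum>i\<in>I. \<Sum>j\<in>I. \<Sum>k\<in>I. b i * A i j * A j k * c k) = 1/24)"

text \<open>Stage values on the grid Z for the upwind discretisation, with xi j l the variable
  xi^j_l.  stages A xi u n j is y^j (for j <= n), built stage by stage.\<close>
primrec stages :: "(nat \<Rightarrow> nat \<Rightarrow> real) \<Rightarrow> (nat \<Rightarrow> int \<Rightarrow> real) \<Rightarrow> (int \<Rightarrow> real)
                    \<Rightarrow> nat \<Rightarrow> nat \<Rightarrow> int \<Rightarrow> real" where
  "stages A xi u 0 = (\<lambda>_ _. 0)"
| "stages A xi u (Suc n) = (stages A xi u n)(Suc n :=
      (\<lambda>l. u l + (\<Sum>j\<in>{1..n}. A (Suc n) j * xi j l *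
                      (stages A xi u n j (l - 1) - stages A xi u n j l))))"

definition rk_step :: "nat \<Rightarrow> (nat \<Rightarrow> nat \<Rightarrow> real) \<Rightarrow> (nat \<Rightarrow> real) \<Rightarrow> (nat \<Rightarrow> int \<Rightarrow> real)
                       \<Rightarrow> (int \<Rightarrow> real) \<Rightarrow> int \<Rightarrow> real" where
  "rk_step m A b xi u k = u k + (\<Sum>i\<in>{1..m}. b i * xi i k *
        (stages A xi u m i (k - 1) - stages A xi u m i k))"

text \<open>P_i(xi): coefficient of u^n_{k-i} in u^{n+1}_k, taken at k = 0 (the scheme is linear in u).\<close>
definition P_coeff :: "nat \<Rightarrow> (nat \<Rightarrow> nat \<Rightarrow> real) \<Rightarrow> (nat \<Rightarrow> real) \<Rightarrow> nat
                       \<Rightarrow> (nat \<Rightarrow> int \<Rightarrow> real) \<Rightarrow> real" where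
  "P_coeff m A b i xi = rk_step m A b xi (\<lambda>l. if l = - int i then 1 else 0) 0"

definition admissible_deltas :: "nat \<Rightarrow> (nat \<Rightarrow> nat \<Rightarrow> real) \<Rightarrow> (nat \<Rightarrow> real) \<Rightarrow> real set" where
  "admissible_deltas m A b = {\<delta>. \<delta> \<ge> 0 \<and>
     (\<forall>i\<in>{0..m}. \<forall>xi. (\<forall>j\<in>{1..m}. \<forall>l\<in>{- int (m - j)..0}. xi j l \<in> {0..\<delta>})
        \<longrightarrow> P_coeff m A b i xi \<ge> 0)}"

text \<open>Step-size coefficient gamma(A,b), as an extended real (the supremum may be infinite).\<close>
definition step_size_coeff :: "nat \<Rightarrow> (nat \<Rightarrow> nat \<Rightarrow> real) \<Rightarrow> (nat \<Rightarrow> real) \<Rightarrow> ereal" where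
  "step_size_coeff m A b =
     (if admissible_deltas m A b = {} then 0 else Sup (ereal ` admissible_deltas m A b))"

end

theory Submission
  imports Defs
begin

text \<open>If every \<open>P\<^sub>i\<close> is nonnegative on \<open>[0, \<delta>]\<^sup>N\<close> for some \<open>\<delta> > 0\<close>, then
  evaluating at \<open>\<xi>\<close> equal to \<open>\<delta>\<close> on a chain of grid points and \<open>0\<close> elsewhere isolates
  single monomials of the \<open>P\<^sub>i\<close>, so \<open>b\<^sub>j \<ge> 0\<close>, \<open>b\<^sub>4 a\<^sub>4\<^sub>j \<ge> 0\<close> and
  \<open>b\<^sub>4 a\<^sub>4\<^sub>3 a\<^sub>3\<^sub>j \<ge> 0\<close>.  For four stages the order conditions force \<open>c\<^sub>4 = 1\<close> and
  \<open>\<Sum>\<^sub>i b\<^sub>i a\<^sub>i\<^sub>j = b\<^sub>j (1 - c\<^sub>j)\<close>, so \<open>b\<^sub>2, b\<^sub>3\<close> are the weights of the quadrature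
  rule with nodes \<open>0, c\<^sub>2, c\<^sub>3, 1\<close>; the signs then give \<open>b\<^sub>2, b\<^sub>3 > 0\<close> and
  \<open>0 < c\<^sub>2, c\<^sub>3 < 1\<close>.  If \<open>c\<^sub>2 < c\<^sub>3\<close>, the condition
  \<open>b\<^sub>3 (1 - c\<^sub>3) a\<^sub>3\<^sub>2 c\<^sub>2 = 1/24\<close> yields two inequalities adding up to
  \<open>(2c\<^sub>2 - 1)\<^sup>2 + (2c\<^sub>3 - 1)\<^sup>2 \<le> 0\<close>; if \<open>c\<^sub>3 < c\<^sub>2\<close>, the same data make
  \<open>b\<^sub>4 a\<^sub>4\<^sub>1\<close> negative.\<close>

lemma P_coeff_nonneg_if_admissible:
  assumes "\<delta> \<in> admissible_deltas m A b" "i \<le> m" "\<And>j l. xi j l \<in> {0..\<delta>}"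
  shows "0 \<le> P_coeff m A b i xi"
  using assms unfolding admissible_deltas_def by auto

lemma admissible_monomial_coeff_nonneg:
  assumes "\<delta> \<in> admissible_deltas m A b" "0 < \<delta>" "i \<le> m"
    and "P_coeff m A b i (\<lambda>j l. if (j, l) \<in> S then \<delta> else 0) = p * \<delta> ^ i"
  shows "0 \<le> p"
proof -
  have "0 \<le> p * \<delta> ^ i"
    unfolding assms(4)[symmetric]
    by (rule P_coeff_nonneg_if_admissible[OF assms(1,3)]) (use assms(2) in auto)
  then show ?thesis using zero_less_power[OF assms(2), of i] by (simp add: zero_le_mult_iff)
qed

lemma step_size_coeff_eq_0_if_admissible_le_0:
  assumes "admissible_deltas m A b \<subseteq> {0}"
  shows "step_size_coeff m A b = 0"
  using assms unfolding step_size_coeff_def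
  by (cases "admissible_deltas m A b = {}") (auto simp: subset_singleton_iff zero_ereal_def)

text \<open>Putting \<open>\<xi>\<^sup>j\<^sub>l = \<delta>\<close> on a chain \<open>(j\<^sub>1, 0), (j\<^sub>2, -1), \<dots>\<close> with
  \<open>j\<^sub>1 > j\<^sub>2 > \<dots>\<close> and \<open>0\<close> elsewhere leaves the single monomial
  \<open>b\<^sub>j\<^sub>1 a\<^sub>j\<^sub>1\<^sub>j\<^sub>2 \<cdots> \<delta>\<^sup>i\<close> in \<open>P\<^sub>i\<close>.\<close>

lemma rk4_admissible_coefficient_signs:
  assumes "\<delta> \<in> admissible_deltas 4 A b" "0 < \<delta>"
  shows "0 \<le> b 2" "0 \<le> b 3" "0 \<le> b 4" "0 \<le> b 4 * A 4 1" "0 \<le> b 4 * A 4 2" "0 \<le> b 4 * A 4 3"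
    "0 \<le> b 4 * A 4 3 * A 3 1" "0 \<le> b 4 * A 4 3 * A 3 2"
proof -
  note monomial = admissible_monomial_coeff_nonneg[OF assms]
  note eval = P_coeff_def rk_step_def numeral_eq_Suc atLeastAtMostSuc_conv
  show "0 \<le> b 2" by (rule monomial[where i=1 and S="{(2, 0)}"]) (simp_all add: eval)
  show "0 \<le> b 3" by (rule monomial[where i=1 and S="{(3, 0)}"]) (simp_all add: eval)
  show "0 \<le> b 4" by (rule monomial[where i=1 and S="{(4, 0)}"]) (simp_all add: eval)
  show "0 \<le> b 4 * A 4 1" by (rule monomial[where i=2 and S="{(4, 0), (1, -1)}"]) (simp_all add: eval)
  show "0 \<le> b 4 * A 4 2" by (rule monomial[where i=2 and S="{(4, 0), (2, -1)}"]) (simp_all add: eval)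
  show "0 \<le> b 4 * A 4 3" by (rule monomial[where i=2 and S="{(4, 0), (3, -1)}"]) (simp_all add: eval)
  show "0 \<le> b 4 * A 4 3 * A 3 1"
    by (rule monomial[where i=3 and S="{(4, 0), (3, -1), (1, -2)}"]) (simp_all add: eval)
  show "0 \<le> b 4 * A 4 3 * A 3 2"
    by (rule monomial[where i=3 and S="{(4, 0), (3, -1), (2, -2)}"]) (simp_all add: eval)
qed

lemma rk_node_explicit_4:
  assumes "explicit_rk 4 A"
  shows "rk_node 4 A 1 = 0" "rk_node 4 A 2 = A 2 1" "rk_node 4 A 3 = A 3 1 + A 3 2"
    "rk_node 4 A 4 = A 4 1 + A 4 2 + A 4 3"
  using assms unfolding explicit_rk_def rk_node_def
  by (simp_all add: numeral_eq_Suc atLeastAtMostSuc_conv)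

lemma rk_order4_explicit_4:
  assumes "explicit_rk 4 A" "rk_order4 4 A b"
  defines "c \<equiv> rk_node 4 A"
  shows "b 2 * c 2 + b 3 * c 3 + b 4 * c 4 = 1/2"
    and "b 2 * c 2^2 + b 3 * c 3^2 + b 4 * c 4^2 = 1/3"
    and "b 3 * A 3 2 * c 2 + b 4 * (A 4 2 * c 2 + A 4 3 * c 3) = 1/6"
    and "b 2 * c 2^3 + b 3 * c 3^3 + b 4 * c 4^3 = 1/4"
    and "b 3 * c 3 * A 3 2 * c 2 + b 4 * c 4 * (A 4 2 * c 2 + A 4 3 * c 3) = 1/8"
    and "b 3 * A 3 2 * c 2^2 + b 4 * (A 4 2 * c 2^2 + A 4 3 * c 3^2) = 1/12"
    and "b 4 * A 4 3 * A 3 2 * c 2 = 1/24"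
  using assms(2) rk_node_explicit_4(1)[OF assms(1)] assms(1)
  unfolding rk_order4_def explicit_rk_def Let_def c_def
  by (simp_all add: numeral_eq_Suc atLeastAtMostSuc_conv algebra_simps)

lemma rk4_order4_simplifying_conditions:
  fixes c2 c3 c4 a32 a42 a43 b2 b3 b4 :: real
  assumes o2: "b2 * c2 + b3 * c3 + b4 * c4 = 1/2"
    and o3: "b2 * c2^2 + b3 * c3^2 + b4 * c4^2 = 1/3"
    and o4: "b3 * a32 * c2 + b4 * (a42 * c2 + a43 * c3) = 1/6"
    and o5: "b2 * c2^3 + b3 * c3^3 + b4 * c4^3 = 1/4"
    and o6: "b3 * c3 * a32 * c2 + b4 * c4 * (a42 * c2 + a43 * c3) = 1/8"
    and o7: "b3 * a32 * c2^2 + b4 * (a42 * c2^2 + a43 * c3^2) = 1/12"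
    and o8: "b4 * a43 * a32 * c2 = 1/24"
  shows "c4 = 1" "b3 * a32 + b4 * a42 = b2 * (1 - c2)" "b4 * a43 = b3 * (1 - c3)"
proof -
  define p where "p = a32 * c2"
  define q where "q = a42 * c2 + a43 * c3"
  \<comment> \<open>The defects \<open>d\<^sub>j\<close> of \<open>\<Sum>\<^sub>i b\<^sub>i a\<^sub>i\<^sub>j = b\<^sub>j (1 - c\<^sub>j)\<close> solve a homogeneous
    linear system (\<open>E1\<close>--\<open>E3\<close>) whose determinant is a multiple of \<open>c\<^sub>2 D\<close>, and \<open>D \<noteq> 0\<close>.\<close>
  define d2 where "d2 = b3 * a32 + b4 * a42 - b2 * (1 - c2)"
  define d3 where "d3 = b4 * a43 - b3 * (1 - c3)"
  define d4 where "d4 = - b4 * (1 - c4)"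
  define D where "D = q * c3 * (c3 - c2) - p * c4 * (c4 - c2)"
  have "p \<noteq> 0" "c2 \<noteq> 0" "b4 \<noteq> 0" using o8 unfolding p_def by auto
  have E1: "d2 * c2 + d3 * c3 + d4 * c4 = 0"
    using o2 o3 o4 unfolding d2_def d3_def d4_def by (simp add: algebra_simps power2_eq_square)
  have E2: "d2 * c2^2 + d3 * c3^2 + d4 * c4^2 = 0"
    using o3 o5 o7 unfolding d2_def d3_def d4_def
    by (simp add: algebra_simps power2_eq_square power3_eq_cube)
  have E3: "d3 * p + d4 * q = 0"
  proof -
    have "d3 * p + d4 * q = b4 * a43 * a32 * c2 - (b3 * a32 * c2 + b4 * (a42 * c2 + a43 * c3))
        + (b3 * c3 * a32 * c2 + b4 * c4 * (a42 * c2 + a43 * c3))"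
      unfolding d3_def d4_def p_def q_def by algebra
    then show ?thesis using o4 o6 o8 by simp
  qed
  have "D \<noteq> 0"
  proof
    assume "D = 0"
    have "p * c2 / 2 - p / 3 + c3 * (c3 - c2) / 6 = b4 * D"
    proof -
      have "p * c2 / 2 - p / 3 + c3 * (c3 - c2) / 6 = p * c2 * (b2 * c2 + b3 * c3 + b4 * c4)
          - p * (b2 * c2^2 + b3 * c3^2 + b4 * c4^2)
          + c3 * (c3 - c2) * (b3 * a32 * c2 + b4 * (a42 * c2 + a43 * c3))"
        unfolding o2 o3 o4 by simp
      also have "\<dots> = b4 * D" unfolding D_def p_def q_def by algebra
      finally show ?thesis .
    qed
    moreover have "p * c2 / 3 - p / 4 + c3 * (c3 - c2) / 8 = b4 * c4 * D"
    proof -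
      have "p * c2 / 3 - p / 4 + c3 * (c3 - c2) / 8 = p * c2 * (b2 * c2^2 + b3 * c3^2 + b4 * c4^2)
          - p * (b2 * c2^3 + b3 * c3^3 + b4 * c4^3)
          + c3 * (c3 - c2) * (b3 * c3 * a32 * c2 + b4 * c4 * (a42 * c2 + a43 * c3))"
        unfolding o3 o5 o6 by simp
      also have "\<dots> = b4 * c4 * D" unfolding D_def p_def q_def by algebra
      finally show ?thesis .
    qed
    ultimately have "p * c2 = 0" using \<open>D = 0\<close> by algebra
    then show False using \<open>p \<noteq> 0\<close> \<open>c2 \<noteq> 0\<close> by simp
  qed
  have "d4 * (c2 * D) = c2^2 * p * (d2 * c2 + d3 * c3 + d4 * c4)
      - c2 * p * (d2 * c2^2 + d3 * c3^2 + d4 * c4^2) + c2 * c3 * (c3 - c2) * (d3 * p + d4 * q)"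
    unfolding D_def by algebra
  then have "d4 = 0" using E1 E2 E3 \<open>D \<noteq> 0\<close> \<open>c2 \<noteq> 0\<close> by simp
  then have "d3 = 0" using E3 \<open>p \<noteq> 0\<close> by simp
  then have "d2 = 0" using E1 \<open>d4 = 0\<close> \<open>c2 \<noteq> 0\<close> by simp
  show "c4 = 1" using \<open>d4 = 0\<close> \<open>b4 \<noteq> 0\<close> unfolding d4_def by simp
  show "b3 * a32 + b4 * a42 = b2 * (1 - c2)" using \<open>d2 = 0\<close> unfolding d2_def by simp
  show "b4 * a43 = b3 * (1 - c3)" using \<open>d3 = 0\<close> unfolding d3_def by simp
qed

lemma quadrature_weights_c4_eq_1:
  fixes c2 c3 b2 b3 b4 :: real
  assumes o2: "b2 * c2 + b3 * c3 + b4 = 1/2"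
    and o3: "b2 * c2^2 + b3 * c3^2 + b4 = 1/3"
    and o5: "b2 * c2^3 + b3 * c3^3 + b4 = 1/4"
  shows "12 * b2 * c2 * (1 - c2) * (c3 - c2) = 2 * c3 - 1"
    and "12 * b3 * c3 * (1 - c3) * (c3 - c2) = 1 - 2 * c2"
proof -
  have "12 * b2 * c2 * (1 - c2) * (c3 - c2) = 12 * ((b2 * c2^3 + b3 * c3^3 + b4)
      - (1 + c3) * (b2 * c2^2 + b3 * c3^2 + b4) + c3 * (b2 * c2 + b3 * c3 + b4))"
    by algebra
  then show "12 * b2 * c2 * (1 - c2) * (c3 - c2) = 2 * c3 - 1"
    unfolding o2 o3 o5 by (simp add: field_simps)
  have "12 * b3 * c3 * (1 - c3) * (c3 - c2) = -12 * ((b2 * c2^3 + b3 * c3^3 + b4)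
      - (1 + c2) * (b2 * c2^2 + b3 * c3^2 + b4) + c2 * (b2 * c2 + b3 * c3 + b4))"
    by algebra
  then show "12 * b3 * c3 * (1 - c3) * (c3 - c2) = 1 - 2 * c2"
    unfolding o2 o3 o5 by (simp add: field_simps)
qed

lemma rk4_increasing_nodes_contradiction:
  fixes c2 c3 a32 b2 b3 :: real
  assumes "c2 < c3" "0 < c2" "c3 < 1" "0 \<le> b3" "a32 \<le> c3"
    and row: "b3 * a32 \<le> b2 * (1 - c2)"
    and tall: "b3 * (1 - c3) * a32 * c2 = 1/24"
    and q2: "12 * b2 * c2 * (1 - c2) * (c3 - c2) = 2 * c3 - 1"
    and q3: "12 * b3 * c3 * (1 - c3) * (c3 - c2) = 1 - 2 * c2"
  shows False
proof -
  have "1 \<le> 24 * b3 * (1 - c3) * c2 * c3"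
  proof -
    have "24 * b3 * (1 - c3) * c2 * a32 \<le> 24 * b3 * (1 - c3) * c2 * c3"
      using assms(2-5) by (intro mult_left_mono) auto
    then show ?thesis using tall by (simp add: algebra_simps)
  qed
  then have "1 * (c3 - c2) \<le> 24 * b3 * (1 - c3) * c2 * c3 * (c3 - c2)"
    using assms(1) by (intro mult_right_mono) auto
  also have "\<dots> = 2 * c2 * (12 * b3 * c3 * (1 - c3) * (c3 - c2))"
    by (simp add: algebra_simps)
  finally have le1: "c3 - c2 \<le> 2 * c2 * (1 - 2 * c2)" unfolding q3 by simp
  have "1 \<le> 24 * c2 * (1 - c3) * b2 * (1 - c2)"
  proof -
    have "24 * c2 * (1 - c3) * (b3 * a32) \<le> 24 * c2 * (1 - c3) * (b2 * (1 - c2))"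
      using assms(2,3) row by (intro mult_left_mono) auto
    then show ?thesis using tall by (simp add: algebra_simps)
  qed
  then have "1 * (c3 - c2) \<le> 24 * c2 * (1 - c3) * b2 * (1 - c2) * (c3 - c2)"
    using assms(1) by (intro mult_right_mono) auto
  also have "\<dots> = 2 * (1 - c3) * (12 * b2 * c2 * (1 - c2) * (c3 - c2))"
    by (simp add: algebra_simps)
  finally have le2: "c3 - c2 \<le> 2 * (1 - c3) * (2 * c3 - 1)" unfolding q2 by simp
  have "(2 * c2 - 1)^2 + (2 * c3 - 1)^2
      = - ((2 * c2 * (1 - 2 * c2) - (c3 - c2)) + (2 * (1 - c3) * (2 * c3 - 1) - (c3 - c2)))"
    by algebra
  then have "(2 * c2 - 1)^2 + (2 * c3 - 1)^2 \<le> 0" using le1 le2 by simp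
  then show False using assms(1) by (simp add: sum_power2_le_zero_iff)
qed

lemma rk4_decreasing_nodes_first_column_negative:
  fixes c2 c3 a32 b2 b3 :: real
  assumes "c3 < c2" "0 < c3" "c2 < 1" "0 < b2" "0 < b3"
    and tall: "b3 * (1 - c3) * a32 * c2 = 1/24"
    and q2: "12 * b2 * c2 * (1 - c2) * (c3 - c2) = 2 * c3 - 1"
    and q3: "12 * b3 * c3 * (1 - c3) * (c3 - c2) = 1 - 2 * c2"
  shows "1/2 - b2 - b3 + b3 * a32 < 0"
proof -
  define s where "s = c2 - 1/2"
  define t where "t = 1/2 - c3"
  have "0 < 12 * b3 * c3 * (1 - c3) * (c2 - c3)" and "0 < 12 * b2 * c2 * (1 - c2) * (c2 - c3)"
    using assms(1-5) by simp_all
  then have s: "0 < s" "s < 1/2" and t: "0 < t" "t < 1/2"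
    using q2 q3 assms(2,3) unfolding s_def t_def by (simp_all add: algebra_simps)
  have "s * t < 1/4"
    using mult_strict_mono[of s "1/2" t "1/2"] s t by simp
  then have pos: "0 < (s + t) * ((s/2 - s^2) + (t/2 - t^2) + 3 * (s * t) * (1 - 4 * (s * t)))"
    using s t by (intro mult_pos_pos add_pos_pos) (simp_all add: power2_eq_square)
  define M where "M = 24 * c2 * c3 * (1 - c2) * (1 - c3) * (c2 - c3)"
  have "M * (1/2 - b2 - b3 + b3 * a32) = 12 * c2 * c3 * (1 - c2) * (1 - c3) * (c2 - c3)
      + 2 * c3 * (1 - c3) * (12 * b2 * c2 * (1 - c2) * (c3 - c2))
      + 2 * c2 * (1 - c2) * (12 * b3 * c3 * (1 - c3) * (c3 - c2))
      + c3 * (1 - c2) * (c2 - c3) * (24 * (b3 * (1 - c3) * a32 * c2))"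
    unfolding M_def by (simp add: algebra_simps)
  also have "\<dots> = - ((s + t) * ((s/2 - s^2) + (t/2 - t^2) + 3 * (s * t) * (1 - 4 * (s * t))))"
    unfolding q2 q3 tall s_def t_def by (simp add: field_simps power2_eq_square)
  finally have "M * (1/2 - b2 - b3 + b3 * a32) < 0" using pos by simp
  moreover have "0 < M" unfolding M_def using assms(1-3) by simp
  ultimately show ?thesis by (simp add: mult_less_0_iff)
qed

lemma rk4_order4_positive_coefficients_impossible:
  fixes c2 c3 c4 a31 a32 a41 a42 a43 b2 b3 b4 :: real
  assumes c3: "c3 = a31 + a32" and c4: "c4 = a41 + a42 + a43"
    and o2: "b2 * c2 + b3 * c3 + b4 * c4 = 1/2"
    and o3: "b2 * c2^2 + b3 * c3^2 + b4 * c4^2 = 1/3"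
    and o4: "b3 * a32 * c2 + b4 * (a42 * c2 + a43 * c3) = 1/6"
    and o5: "b2 * c2^3 + b3 * c3^3 + b4 * c4^3 = 1/4"
    and o6: "b3 * c3 * a32 * c2 + b4 * c4 * (a42 * c2 + a43 * c3) = 1/8"
    and o7: "b3 * a32 * c2^2 + b4 * (a42 * c2^2 + a43 * c3^2) = 1/12"
    and o8: "b4 * a43 * a32 * c2 = 1/24"
    and "c2 \<noteq> c3"
    and b_nonneg: "0 \<le> b2" "0 \<le> b3" "0 \<le> b4"
    and row4_nonneg: "0 \<le> b4 * a41" "0 \<le> b4 * a42" "0 \<le> b4 * a43"
    and chain_nonneg: "0 \<le> b4 * a43 * a31" "0 \<le> b4 * a43 * a32"
  shows False
proof -
  have "c4 = 1" and row2: "b3 * a32 + b4 * a42 = b2 * (1 - c2)"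
    and row3: "b4 * a43 = b3 * (1 - c3)"
    by (fact rk4_order4_simplifying_conditions[OF o2 o3 o4 o5 o6 o7 o8])+
  have q2: "12 * b2 * c2 * (1 - c2) * (c3 - c2) = 2 * c3 - 1"
    and q3: "12 * b3 * c3 * (1 - c3) * (c3 - c2) = 1 - 2 * c2"
    using quadrature_weights_c4_eq_1[of b2 c2 b3 c3 b4] o2 o3 o5 \<open>c4 = 1\<close> by simp_all
  have tall: "b3 * (1 - c3) * a32 * c2 = 1/24"
    using o8 row3 by simp
  have "0 < b4 * a43" "0 < b4 * a43 * a32" "0 < b4"
    using b_nonneg(3) row4_nonneg(3) chain_nonneg(2) o8 by (auto simp: less_le)
  then have "0 < a43" "0 < a32" by (auto intro: zero_less_mult_pos)
  have "0 < c2"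
    using zero_less_mult_pos[of "b4 * a43 * a32" c2] o8 \<open>0 < b4 * a43 * a32\<close> by simp
  have "0 \<le> a42" "0 \<le> a31"
    using mult_le_cancel_left_pos[of b4 0 a42] mult_le_cancel_left_pos[of "b4 * a43" 0 a31]
      row4_nonneg(2) chain_nonneg(1) \<open>0 < b4\<close> \<open>0 < b4 * a43\<close> by simp_all
  then have "0 < b3" "c3 < 1"
    using row3 \<open>0 < b4 * a43\<close> b_nonneg(2) by (auto simp: zero_less_mult_iff)
  then have "0 < b2" "c2 < 1"
    using row2 \<open>0 < b4\<close> \<open>0 < a32\<close> \<open>0 \<le> a42\<close> b_nonneg(1)
    by (smt (verit) mult_pos_pos mult_nonneg_nonneg zero_less_mult_iff)+
  consider "c2 < c3" | "c3 < c2" using \<open>c2 \<noteq> c3\<close> by linarith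
  then show False
  proof cases
    case 1
    show False
    proof (rule rk4_increasing_nodes_contradiction[OF 1 _ _ _ _ _ tall q2 q3])
      show "b3 * a32 \<le> b2 * (1 - c2)" using row2 row4_nonneg(2) by linarith
    qed (use c3 \<open>0 < c2\<close> \<open>c3 < 1\<close> \<open>0 < b3\<close> \<open>0 \<le> a31\<close> in auto)
  next
    case 2
    have "b4 * a41 = 1/2 - b2 - b3 + b3 * a32"
      using o2 c4 \<open>c4 = 1\<close> row2 row3 by (simp add: algebra_simps)
    moreover have "1/2 - b2 - b3 + b3 * a32 < 0"
      using rk4_decreasing_nodes_first_column_negative[OF 2 _ \<open>c2 < 1\<close> \<open>0 < b2\<close> \<open>0 < b3\<close> tall q2 q3]
        c3 \<open>0 < a32\<close> \<open>0 \<le> a31\<close> by linarith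
    ultimately show False using row4_nonneg(1) by linarith
  qed
qed

lemma rk4_order4_admissible_deltas_subset_0:
  assumes "explicit_rk 4 A" "non_confluent 4 A" "rk_order4 4 A b"
  shows "admissible_deltas 4 A b \<subseteq> {0}"
proof
  fix \<delta> assume \<delta>: "\<delta> \<in> admissible_deltas 4 A b"
  have "0 \<le> \<delta>" using \<delta> unfolding admissible_deltas_def by simp
  moreover have "\<not> 0 < \<delta>"
  proof
    assume "0 < \<delta>"
    have "rk_node 4 A 2 \<noteq> rk_node 4 A 3"
      using assms(2) unfolding non_confluent_def inj_on_def by fastforce
    then show False
      using rk4_order4_positive_coefficients_impossible[OF rk_node_explicit_4(3,4)[OF assms(1)]
          rk_order4_explicit_4[OF assms(1,3)] _ rk4_admissible_coefficient_signs[OF \<delta> \<open>0 < \<delta>\<close>]]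
      by blast
  qed
  ultimately show "\<delta> \<in> {0}" by simp
qed

theorem proposition7:
  fixes A :: "nat \<Rightarrow> nat \<Rightarrow> real" and b :: "nat \<Rightarrow> real"
  assumes "explicit_rk 4 A"
    and "non_confluent 4 A"
    and "rk_order4 4 A b"
  shows "step_size_coeff 4 A b = 0"
  using rk4_order4_admissible_deltas_subset_0[OF assms] by (rule step_size_coeff_eq_0_if_admissible_le_0)

end
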